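(* Let $(G,\precsim)$ be a compatible quasi-ordered abelian group and define the ternary relation $C$ on $G$ by: $C(x,y,z)$ holds iff $(x\neq y=z)\vee\big(x-z\in G^v\wedge y-z\precnsim x-z\big)\vee\big(y-z\in G^o\wedge x-z\in G^o\wedge 0\precnsim x-y\wedge 0\precnsim x-z\big)$. Then $C$ is a C-relation on $G$ compatible with $+$. Moreover, $\precsim$ is the only compatible quasi-order on $G$ inducing $C$ (via this formula), $C$ is definable by a quantifier-free formula in the language $\{0,+,-,\precsim\}$, and $\precsim$ is definable by a quantifier-free formula in the language $\{0,+,-,C\}$.
   Context: A compatible quasi-ordered abelian group is an abelian group $G$ with a total quasi-order $\precsim$ (reflexive, transitive, any two elements comparable) such that, writing $a\sim b$ for $a\precsim b\wedge b\precsim a$: $(Q_1)$ $x\sim0\Rightarrow x=0$; $(Q_2)$ $x\precsim y\wedge y\not\sim z\Rightarrow x+z\precsim y+z$. $a\precnsim b$ means $a\precsim b\wedge a\not\sim b$. With $cl(g)$ the $\sim$-class of $g$, $g$ is o-type if $cl(g)=\{g\}$ and $g$ is not of order $2$; $G^o$ is the set of o-type elements and $G^v=G\setminus G^o$. A C-relation on a set $M$ is a ternary relation $C$ satisfying: $(C_1)$ $C(x,y,z)\Rightarrow C(x,z,y)$; $(C_2)$ $C(x,y,z)\Rightarrow\neg C(y,x,z)$; $(C_3)$ $C(x,y,z)\Rightarrow C(w,y,z)\vee C(x,w,z)$; $(C_4)$ $x\neq y\Rightarrow C(x,y,y)$. It is compatible with $+$ if $C(x,y,z)\Rightarrow C(v+x+u,v+y+u,v+z+u)$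 for all $x,y,z,u,v$. *)

theory Defs
  imports Main
begin

definition qsim :: "('a \<Rightarrow> 'a \<Rightarrow> bool) \<Rightarrow> 'a \<Rightarrow> 'a \<Rightarrow> bool" where
  "qsim le a b \<longleftrightarrow> le a b \<and> le b a"

definition qstrict :: "('a \<Rightarrow> 'a \<Rightarrow> bool) \<Rightarrow> 'a \<Rightarrow> 'a \<Rightarrow> bool" where
  "qstrict le a b \<longleftrightarrow> le a b \<and> \<not> qsim le a b"

definition compatible_qo :: "('a::ab_group_add \<Rightarrow> 'a \<Rightarrow> bool) \<Rightarrow> bool" where
  "compatible_qo le \<longleftrightarrow>
     (\<forall>x. le x x) \<and>
     (\<forall>x y z. le x y \<and> le y z \<longrightarrow> le x z) \<and>
     (\<forall>x y. le x y \<or> le y x) \<and>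
     (\<forall>x. qsim le x 0 \<longrightarrow> x = 0) \<and>
     (\<forall>x y z. le x y \<and> \<not> qsim le y z \<longrightarrow> le (x + z) (y + z))"

definition order_two :: "'a::ab_group_add \<Rightarrow> bool" where
  "order_two g \<longleftrightarrow> g \<noteq> 0 \<and> g + g = 0"

definition otype :: "('a::ab_group_add \<Rightarrow> 'a \<Rightarrow> bool) \<Rightarrow> 'a \<Rightarrow> bool" where
  "otype le g \<longleftrightarrow> {h. qsim le h g} = {g} \<and> \<not> order_two g"

definition vtype :: "('a::ab_group_add \<Rightarrow> 'a \<Rightarrow> bool) \<Rightarrow> 'a \<Rightarrow> bool" where
  "vtype le g \<longleftrightarrow> \<not> otype le g"

definition induced_C :: "('a::ab_group_add \<Rightarrow> 'a \<Rightarrow> bool) \<Rightarrow> 'a \<Rightarrow> 'a \<Rightarrow> 'a \<Rightarrow> bool" where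
  "induced_C le x y z \<longleftrightarrow>
     (x \<noteq> y \<and> y = z) \<or>
     (vtype le (x - z) \<and> qstrict le (y - z) (x - z)) \<or>
     (otype le (y - z) \<and> otype le (x - z) \<and> qstrict le 0 (x - y) \<and> qstrict le 0 (x - z))"

definition C_relation :: "('a \<Rightarrow> 'a \<Rightarrow> 'a \<Rightarrow> bool) \<Rightarrow> bool" where
  "C_relation C \<longleftrightarrow>
     (\<forall>x y z. C x y z \<longrightarrow> C x z y) \<and>
     (\<forall>x y z. C x y z \<longrightarrow> \<not> C y x z) \<and>
     (\<forall>x y z w. C x y z \<longrightarrow> C w y z \<or> C x w z) \<and>
     (\<forall>x y. x \<noteq> y \<longrightarrow> C x y y)"

definition C_compatible :: "('a::ab_group_add \<Rightarrow> 'a \<Rightarrow> 'a \<Rightarrow> bool) \<Rightarrow> bool" where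
  "C_compatible C \<longleftrightarrow>
     (\<forall>x y z u v. C x y z \<longrightarrow> C (v + x + u) (v + y + u) (v + z + u))"

datatype gterm = TVar nat | TZero | TPlus gterm gterm | TMinus gterm gterm | TUminus gterm

datatype qf_form = FTrue | FFalse
  | FEq gterm gterm
  | FLe gterm gterm
  | FC gterm gterm gterm
  | FNot qf_form | FAnd qf_form qf_form | FOr qf_form qf_form

primrec teval :: "(nat \<Rightarrow> 'a::ab_group_add) \<Rightarrow> gterm \<Rightarrow> 'a" where
  "teval e (TVar n) = e n"
| "teval e TZero = 0"
| "teval e (TPlus s t) = teval e s + teval e t"
| "teval e (TMinus s t) = teval e s - teval e t"
| "teval e (TUminus s) = - teval e s"

primrec feval :: "('a::ab_group_add \<Rightarrow> 'a \<Rightarrow> bool) \<Rightarrow> ('a \<Rightarrow> 'a \<Rightarrow> 'a \<Rightarrow> bool)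
    \<Rightarrow> (nat \<Rightarrow> 'a) \<Rightarrow> qf_form \<Rightarrow> bool" where
  "feval le C e FTrue = True"
| "feval le C e FFalse = False"
| "feval le C e (FEq s t) = (teval e s = teval e t)"
| "feval le C e (FLe s t) = le (teval e s) (teval e t)"
| "feval le C e (FC r s t) = C (teval e r) (teval e s) (teval e t)"
| "feval le C e (FNot f) = (\<not> feval le C e f)"
| "feval le C e (FAnd f g) = (feval le C e f \<and> feval le C e g)"
| "feval le C e (FOr f g) = (feval le C e f \<or> feval le C e g)"

primrec no_C :: "qf_form \<Rightarrow> bool" where
  "no_C FTrue = True" | "no_C FFalse = True" | "no_C (FEq s t) = True"
| "no_C (FLe s t) = True" | "no_C (FC r s t) = False"
| "no_C (FNot f) = no_C f" | "no_C (FAnd f g) = (no_C f \<and> no_C g)"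
| "no_C (FOr f g) = (no_C f \<and> no_C g)"

primrec no_Le :: "qf_form \<Rightarrow> bool" where
  "no_Le FTrue = True" | "no_Le FFalse = True" | "no_Le (FEq s t) = True"
| "no_Le (FLe s t) = False" | "no_Le (FC r s t) = True"
| "no_Le (FNot f) = no_Le f" | "no_Le (FAnd f g) = (no_Le f \<and> no_Le g)"
| "no_Le (FOr f g) = (no_Le f \<and> no_Le g)"

end

theory Submission
  imports Defs
begin

text \<open>By (Q2), an element whose \<open>\<sim>\<close>-class has at least two elements is equivalent to its
  negative, so the o-type elements are exactly \<open>0\<close> and those not equivalent to their negative.
  Again from (Q2) one gets that the o-type elements form a subgroup on which \<open>\<precsim>\<close> is a compatible
  linear order, that every v-type element lies strictly above every o-type element, and that
  adding a strictly smaller element to a v-type element does not change its class. Hence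
  \<open>C(x, y, z)\<close> behaves like the C-relation of a valuation on the differences of v-type and
  like the C-relation of an ordered group on the differences of o-type, and both the
  C-axioms and compatibility reduce to case analyses at the base point \<open>z = 0\<close>.
  Conversely, \<open>g\<close> is of v-type iff \<open>g \<noteq> 0\<close> and neither \<open>C(g, -g, 0)\<close> nor \<open>C(-g, g, 0)\<close>,
  and then \<open>x \<precsim> y\<close> can be read off from \<open>C\<close> on the base point \<open>0\<close>, which gives both
  uniqueness of \<open>\<precsim>\<close> and its quantifier-free definability.\<close>

lemma qstrict_iff: "qstrict le a b \<longleftrightarrow> le a b \<and> \<not> le b a"
  by (auto simp: qstrict_def qsim_def)

lemma induced_C_translate: "induced_C le x y z \<longleftrightarrow> induced_C le (x - z) (y - z) 0"
proof -
  have "(x - z) - (y - z) = x - y" by (simp add: algebra_simps)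
  then show ?thesis by (simp add: induced_C_def)
qed

locale compatible_qo_group =
  fixes le :: "'a::ab_group_add \<Rightarrow> 'a \<Rightarrow> bool" (infix "\<precsim>" 50)
  assumes compatible: "compatible_qo le"
begin

abbreviation less :: "'a \<Rightarrow> 'a \<Rightarrow> bool" (infix "\<prec>" 50) where
  "x \<prec> y \<equiv> x \<precsim> y \<and> \<not> y \<precsim> x"

lemma qo_refl: "x \<precsim> x"
  using compatible unfolding compatible_qo_def by blast

lemma qo_trans: "x \<precsim> y \<Longrightarrow> y \<precsim> z \<Longrightarrow> x \<precsim> z"
  using compatible unfolding compatible_qo_def by blast

lemma qo_total: "x \<precsim> y \<or> y \<precsim> x"
  using compatible unfolding compatible_qo_def by blast

lemma sim_zero_eq: "x \<precsim> 0 \<Longrightarrow> 0 \<precsim> x \<Longrightarrow> x = 0"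
  using compatible unfolding compatible_qo_def qsim_def by blast

lemma qo_add_right: "x \<precsim> y \<Longrightarrow> \<not> (y \<precsim> z \<and> z \<precsim> y) \<Longrightarrow> x + z \<precsim> y + z"
  using compatible unfolding compatible_qo_def qsim_def by blast

lemma not_sim_zero: "z \<noteq> 0 \<Longrightarrow> \<not> (0 \<precsim> z \<and> z \<precsim> 0)"
  using sim_zero_eq by blast

lemma pos_or_neg: "x \<noteq> 0 \<Longrightarrow> 0 \<prec> x \<or> x \<prec> 0"
  using qo_total sim_zero_eq by blast

lemma sim_neg_if_sim_other:
  assumes "x \<precsim> y" "y \<precsim> x" "x \<noteq> y"
  shows "x \<precsim> -x \<and> -x \<precsim> x"
proof (rule ccontr)
  assume not_sim: "\<not> (x \<precsim> -x \<and> -x \<precsim> x)"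
  then have "\<not> (y \<precsim> -x \<and> -x \<precsim> y)" using assms qo_trans by blast
  from qo_add_right[OF assms(1) this] have "0 \<precsim> y - x" by simp
  moreover from qo_add_right[OF assms(2) not_sim] have "y - x \<precsim> 0" by simp
  ultimately have "y - x = 0" using sim_zero_eq by blast
  then show False using assms(3) by simp
qed

lemma otype_iff: "otype le g \<longleftrightarrow> g = 0 \<or> \<not> (g \<precsim> -g \<and> -g \<precsim> g)"
proof
  assume o: "otype le g"
  show "g = 0 \<or> \<not> (g \<precsim> -g \<and> -g \<precsim> g)"
  proof (rule ccontr)
    assume "\<not> ?thesis"
    then have g: "g \<noteq> 0" "g \<precsim> -g" "-g \<precsim> g" by auto
    then have "-g \<in> {h. qsim le h g}" by (simp add: qsim_def)
    then have "-g = g" using o by (auto simp: otype_def)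
    then have "g + g = 0" by (metis neg_eq_iff_add_eq_0)
    then show False using o g by (auto simp: otype_def order_two_def)
  qed
next
  assume g: "g = 0 \<or> \<not> (g \<precsim> -g \<and> -g \<precsim> g)"
  have "h = g" if "h \<precsim> g" "g \<precsim> h" for h
    using g sim_zero_eq[of h] sim_neg_if_sim_other[of g h] that by blast
  then have "{h. qsim le h g} = {g}" using qo_refl by (auto simp: qsim_def)
  moreover have "\<not> order_two g"
  proof
    assume "order_two g"
    then have "g \<noteq> 0" "-g = g" by (auto simp: order_two_def neg_eq_iff_add_eq_0)
    then show False using g qo_refl by simp
  qed
  ultimately show "otype le g" by (simp add: otype_def)
qed

lemma vtype_iff: "vtype le g \<longleftrightarrow> g \<noteq> 0 \<and> g \<precsim> -g \<and> -g \<precsim> g"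
  by (auto simp: vtype_def otype_iff)

lemma otype_zero [simp]: "otype le 0"
  by (simp add: otype_iff)

lemma otype_uminus [simp]: "otype le (-x) \<longleftrightarrow> otype le x"
  by (auto simp: otype_iff)

lemma vtype_uminus [simp]: "vtype le (-x) \<longleftrightarrow> vtype le x"
  by (simp add: vtype_def)

lemma otype_sim_imp_eq: "otype le x \<Longrightarrow> x \<precsim> y \<Longrightarrow> y \<precsim> x \<Longrightarrow> y = x"
  using sim_neg_if_sim_other[of x y] sim_zero_eq[of y] by (auto simp: otype_iff)

lemma vtype_sim: "vtype le x \<Longrightarrow> x \<precsim> y \<Longrightarrow> y \<precsim> x \<Longrightarrow> vtype le y"
  unfolding vtype_def using otype_sim_imp_eq[of y x] by blast

lemma vtype_pos: "vtype le a \<Longrightarrow> 0 \<prec> a"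
proof -
  assume "vtype le a"
  then have a: "a \<noteq> 0" "a \<precsim> -a" "-a \<precsim> a" by (auto simp: vtype_iff)
  have "\<not> a \<precsim> 0"
  proof
    assume "a \<precsim> 0"
    moreover from qo_add_right[OF this not_sim_zero, of "-a"] a have "0 \<precsim> -a" by simp
    then have "0 \<precsim> a" using a qo_trans by blast
    ultimately show False using sim_zero_eq a by blast
  qed
  then show ?thesis using qo_total by blast
qed

lemma neg_imp_uminus_pos: "x \<prec> 0 \<Longrightarrow> 0 \<prec> -x"
proof -
  assume x: "x \<prec> 0"
  then have "-x \<noteq> 0" by auto
  with qo_add_right[of x 0 "-x", OF _ not_sim_zero] x have "0 \<precsim> -x" by simp
  with \<open>-x \<noteq> 0\<close> sim_zero_eq show ?thesis by blast
qed

lemma otype_pos_imp_uminus_neg: "otype le x \<Longrightarrow> 0 \<prec> x \<Longrightarrow> -x \<prec> 0"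
proof -
  assume o: "otype le x" and x: "0 \<prec> x"
  then have "\<not> (x \<precsim> -x \<and> -x \<precsim> x)" by (auto simp: otype_iff)
  from qo_add_right[of 0 x "-x", OF _ this] x have "-x \<precsim> 0" by simp
  moreover have "-x \<noteq> 0" using x by auto
  ultimately show ?thesis using sim_zero_eq by blast
qed

lemma otype_pos_double: "otype le x \<Longrightarrow> 0 \<prec> x \<Longrightarrow> 0 \<prec> x + x"
proof -
  assume o: "otype le x" and x: "0 \<prec> x"
  have xx: "x + x \<noteq> 0"
  proof
    assume "x + x = 0"
    then have "-x = x" by (metis neg_eq_iff_add_eq_0)
    then show False using o x qo_refl by (auto simp: otype_iff)
  qed
  have "-x \<precsim> 0" using otype_pos_imp_uminus_neg o x by blast
  from qo_add_right[OF this not_sim_zero[OF xx]] have "x \<precsim> x + x"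
    by (simp add: add.assoc[symmetric])
  then have "0 \<precsim> x + x" using x qo_trans by blast
  with xx sim_zero_eq show ?thesis by blast
qed

lemma otype_double_pos: "otype le x \<Longrightarrow> 0 \<prec> x \<Longrightarrow> otype le (x + x)"
proof (rule ccontr)
  assume o: "otype le x" and x: "0 \<prec> x" and "\<not> otype le (x + x)"
  then have "x + x \<precsim> -(x + x)" by (simp add: otype_iff)
  moreover have neg: "-x \<prec> 0" using otype_pos_imp_uminus_neg o x by blast
  then have "-x \<noteq> 0" by auto
  from qo_add_right[OF _ not_sim_zero[OF this], of "-x"] neg have "-(x + x) \<precsim> -x"
    by (simp add: algebra_simps)
  ultimately have "x + x \<precsim> 0" using neg qo_trans by blast
  then show False using otype_pos_double o x by blast
qed

lemma otype_double: "otype le x \<Longrightarrow> otype le (x + x)"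
proof -
  assume o: "otype le x"
  consider "x = 0" | "0 \<prec> x" | "0 \<prec> -x" using pos_or_neg neg_imp_uminus_pos by blast
  then show ?thesis
  proof cases
    case 3
    then have "otype le (-x + -x)" using otype_double_pos[of "-x"] o by simp
    then show ?thesis by (metis minus_add_distrib otype_uminus)
  qed (use otype_double_pos o in auto)
qed

lemma otype_less_imp_diff:
  assumes ox: "otype le x" and oy: "otype le y" and xy: "x \<prec> y"
  shows "otype le (y - x) \<and> 0 \<prec> y - x"
  \<comment> \<open>adding \<open>-x\<close> via (Q2) requires \<open>y \<not>\<sim> -x\<close>, hence the separate case \<open>y = -x\<close>\<close>
proof (cases "y = -x")
  case True
  have "\<not> 0 \<prec> x"
  proof
    assume "0 \<prec> x"
    then have "-x \<prec> 0" using otype_pos_imp_uminus_neg ox by blast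
    then show False using xy True \<open>0 \<prec> x\<close> qo_trans by blast
  qed
  moreover have "x \<noteq> 0" using xy True by auto
  ultimately have "0 \<prec> -x" using pos_or_neg neg_imp_uminus_pos by blast
  moreover have "y - x = -x + -x" using True by simp
  ultimately show ?thesis using otype_pos_double[of "-x"] otype_double[of "-x"] ox by simp
next
  case y_ne: False
  have "\<not> (y \<precsim> -x \<and> -x \<precsim> y)" using otype_sim_imp_eq[OF oy] y_ne by metis
  from qo_add_right[OF _ this, of x] xy have nonneg: "0 \<precsim> y - x" by simp
  show ?thesis
  proof (cases "y = 0")
    case True
    then show ?thesis using neg_imp_uminus_pos xy ox by simp
  next
    case False
    then have "\<not> (y \<precsim> -y \<and> -y \<precsim> y)" using oy by (simp add: otype_iff)
    from qo_add_right[OF _ this, of x] xy have nonpos: "x - y \<precsim> 0" by simp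
    have "otype le (y - x)"
    proof (rule ccontr)
      assume "\<not> otype le (y - x)"
      then have "0 \<prec> x - y" using vtype_pos vtype_uminus by (metis minus_diff_eq vtype_def)
      then show False using nonpos by blast
    qed
    moreover have "y - x \<noteq> 0" using xy by auto
    ultimately show ?thesis using nonneg sim_zero_eq by blast
  qed
qed

lemma otype_diff:
  assumes ox: "otype le x" and oy: "otype le y"
  shows "otype le (y - x)"
proof -
  consider "x \<precsim> y \<and> y \<precsim> x" | "x \<prec> y" | "y \<prec> x" using qo_total by blast
  then show ?thesis
  proof cases
    case 1
    then have "y = x" using otype_sim_imp_eq ox by blast
    then show ?thesis by simp
  next
    case 2
    then show ?thesis using otype_less_imp_diff ox oy by blast
  next
    case 3
    then have "otype le (x - y)" using otype_less_imp_diff ox oy by blast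
    then show ?thesis by (metis minus_diff_eq otype_uminus)
  qed
qed

lemma otype_less_iff_diff_pos:
  assumes "otype le x" "otype le y"
  shows "x \<prec> y \<longleftrightarrow> 0 \<prec> y - x"
proof
  assume "x \<prec> y"
  then show "0 \<prec> y - x" using otype_less_imp_diff assms by blast
next
  assume pos: "0 \<prec> y - x"
  consider "x \<precsim> y \<and> y \<precsim> x" | "x \<prec> y" | "y \<prec> x" using qo_total by blast
  then show "x \<prec> y"
  proof cases
    case 1
    then have "y = x" using otype_sim_imp_eq assms by blast
    then show ?thesis using pos by simp
  next
    case 3
    then have "0 \<prec> x - y" using otype_less_imp_diff assms by blast
    moreover have "x - y \<prec> 0"
      using otype_pos_imp_uminus_neg[OF otype_diff[OF assms] pos] by simp
    ultimately show ?thesis by blast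
  qed
qed

lemma otype_add_vtype: "otype le p \<Longrightarrow> vtype le a \<Longrightarrow> vtype le (p + a)"
proof (rule ccontr)
  assume op: "otype le p" and va: "vtype le a" and "\<not> vtype le (p + a)"
  then have "otype le (p + a - p)" using otype_diff[of p "p + a"] by (simp add: vtype_def)
  then show False using va by (simp add: vtype_def)
qed

lemma otype_less_vtype: "vtype le a \<Longrightarrow> otype le p \<Longrightarrow> p \<prec> a"
proof (cases "p = 0")
  case True
  assume "vtype le a"
  then show ?thesis using vtype_pos True by simp
next
  case False
  assume va: "vtype le a" and op: "otype le p"
  then have not_sim: "\<not> (p \<precsim> -p \<and> -p \<precsim> p)" using False by (simp add: otype_iff)
  have "\<not> a \<precsim> p"
  proof
    assume "a \<precsim> p"
    from qo_add_right[OF this not_sim] have "a - p \<precsim> 0" by simp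
    moreover have "vtype le (-p + a)" using otype_add_vtype[of "-p" a] op va by simp
    then have "0 \<prec> a - p" using vtype_pos by simp
    ultimately show False by blast
  qed
  then show ?thesis using qo_total by blast
qed

lemma vtype_greater_uminus: "vtype le a \<Longrightarrow> b \<prec> a \<Longrightarrow> -b \<prec> a"
proof (cases "vtype le b")
  case True
  then have "-b \<precsim> b" "b \<precsim> -b" by (auto simp: vtype_iff)
  moreover assume "b \<prec> a"
  ultimately show ?thesis using qo_trans by blast
next
  case False
  moreover assume "vtype le a"
  ultimately show ?thesis using otype_less_vtype by (simp add: vtype_def)
qed

lemma vtype_add_smaller_sim:
  assumes va: "vtype le a" and ba: "b \<prec> a"
  shows "a + b \<precsim> a \<and> a \<precsim> a + b"
proof
  have a: "a \<precsim> -a" "-a \<precsim> a" using va by (auto simp: vtype_iff)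
  have nba: "-b \<prec> a" using vtype_greater_uminus va ba by blast
  show "a + b \<precsim> a"
  proof (rule ccontr)
    assume not_le: "\<not> a + b \<precsim> a"
    then have ab: "a \<precsim> a + b" using qo_total by blast
    have "vtype le (a + b)" using otype_less_vtype va not_le vtype_def by blast
    then have ab_neg: "a + b \<precsim> -(a + b)" by (simp add: vtype_iff)
    have "\<not> (a + b \<precsim> -b \<and> -b \<precsim> a + b)" using ab nba qo_trans by blast
    from qo_add_right[OF qo_trans[OF a(2) ab] this] have "-(a + b) \<precsim> a"
      by (simp add: algebra_simps)
    then show False using ab_neg not_le qo_trans by blast
  qed
  show "a \<precsim> a + b"
  proof (rule ccontr)
    assume not_le: "\<not> a \<precsim> a + b"
    have sim: "a \<precsim> -(a + b) \<and> -(a + b) \<precsim> a"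
    proof (rule ccontr)
      assume "\<not> ?thesis"
      from qo_add_right[OF _ this, of b] ba have "-a \<precsim> -b" by (simp add: algebra_simps)
      then show False using a nba qo_trans by blast
    qed
    show False
    proof (cases "-(a + b) = a")
      case True
      then have "a + b = -a" by (metis minus_minus)
      then show False using not_le a by simp
    next
      case False
      then have "vtype le (-(a + b))" using vtype_sim va sim by blast
      then have "-(a + b) \<precsim> a + b" unfolding vtype_iff minus_minus by blast
      then show False using not_le sim qo_trans by blast
    qed
  qed
qed

lemma induced_C_zero_iff:
  "induced_C le a b 0 \<longleftrightarrow> (a \<noteq> b \<and> b = 0) \<or> (vtype le a \<and> b \<prec> a)
     \<or> (otype le b \<and> otype le a \<and> 0 \<prec> a - b \<and> 0 \<prec> a)"
  by (simp add: induced_C_def qstrict_iff)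

lemma induced_C_zero_swap: "induced_C le a b 0 \<Longrightarrow> induced_C le (a - b) (-b) 0"
proof -
  assume "induced_C le a b 0"
  then consider "a \<noteq> b \<and> b = 0" | "vtype le a \<and> b \<prec> a"
    | "otype le b \<and> otype le a \<and> 0 \<prec> a - b \<and> 0 \<prec> a"
    unfolding induced_C_zero_iff by blast
  then show ?thesis
  proof cases
    case 2
    then have va: "vtype le a" and nba: "-b \<prec> a" using vtype_greater_uminus by auto
    have sim: "a - b \<precsim> a" "a \<precsim> a - b" using vtype_add_smaller_sim[OF va nba] by simp_all
    then have "vtype le (a - b)" using vtype_sim[OF va] by blast
    moreover have "-b \<prec> a - b" using nba sim qo_trans by blast
    ultimately show ?thesis by (simp add: induced_C_zero_iff)
  next
    case 3
    then show ?thesis using otype_diff by (simp add: induced_C_zero_iff)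
  qed (auto simp: induced_C_zero_iff)
qed

lemma induced_C_zero_asym: "induced_C le a b 0 \<Longrightarrow> \<not> induced_C le b a 0"
proof -
  assume "induced_C le a b 0"
  then consider "a \<noteq> b \<and> b = 0" | "vtype le a \<and> b \<prec> a"
    | "otype le b \<and> otype le a \<and> 0 \<prec> a - b \<and> 0 \<prec> a"
    unfolding induced_C_zero_iff by blast
  then show ?thesis
  proof cases
    case 3
    then have "b - a \<prec> 0" using otype_pos_imp_uminus_neg[of "a - b"] otype_diff[of b a] by simp
    then show ?thesis using 3 by (auto simp: induced_C_zero_iff vtype_def)
  qed (auto simp: induced_C_zero_iff vtype_def)
qed

lemma induced_C_zero_split:
  assumes C: "induced_C le a b 0"
  shows "induced_C le c b 0 \<or> induced_C le a c 0"
proof -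
  consider "a \<noteq> b \<and> b = 0" | "vtype le a \<and> b \<prec> a"
    | "otype le b \<and> otype le a \<and> 0 \<prec> a - b \<and> 0 \<prec> a"
    using C unfolding induced_C_zero_iff by blast
  then show ?thesis
  proof cases
    case 1
    then show ?thesis by (auto simp: induced_C_zero_iff)
  next
    case 2
    show ?thesis
    proof (cases "c \<prec> a")
      case True
      then show ?thesis using 2 by (simp add: induced_C_zero_iff)
    next
      case False
      then have "a \<precsim> c" using qo_total by blast
      moreover have "vtype le c" using False otype_less_vtype 2 vtype_def by blast
      ultimately have "vtype le c \<and> b \<prec> c" using 2 qo_trans by blast
      then show ?thesis by (simp add: induced_C_zero_iff)
    qed
  next
    case 3
    then have ob: "otype le b" and oa: "otype le a" and a: "0 \<prec> a" by auto
    then have ba: "b \<prec> a" using otype_less_iff_diff_pos[OF ob oa] 3 by blast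
    show ?thesis
    proof (cases "vtype le c")
      case True
      then show ?thesis using otype_less_vtype ob by (simp add: induced_C_zero_iff)
    next
      case False
      then have oc: "otype le c" by (simp add: vtype_def)
      consider "c \<prec> a" | "a \<prec> c" | "a \<precsim> c \<and> c \<precsim> a" using qo_total by blast
      then show ?thesis
      proof cases
        case 1
        then have "0 \<prec> a - c" using otype_less_iff_diff_pos[OF oc oa] by blast
        then show ?thesis using oc oa a by (simp add: induced_C_zero_iff)
      next
        case 2
        then have "b \<prec> c" "0 \<prec> c" using ba a qo_trans by blast+
        moreover from \<open>b \<prec> c\<close> have "0 \<prec> c - b" using otype_less_iff_diff_pos[OF ob oc] by blast
        ultimately show ?thesis using oc ob by (simp add: induced_C_zero_iff)
      next
        case 3
        then have "c = a" using otype_sim_imp_eq[OF oa] by blast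
        then show ?thesis using C by simp
      qed
    qed
  qed
qed

theorem C_relation_induced_C: "C_relation (induced_C le)"
  unfolding C_relation_def
proof (intro conjI allI impI)
  fix x y z
  assume "induced_C le x y z"
  then have "induced_C le (x - z - (y - z)) (-(y - z)) 0"
    using induced_C_zero_swap induced_C_translate by blast
  then show "induced_C le x z y" by (subst induced_C_translate) (simp add: algebra_simps)
next
  fix x y z
  assume "induced_C le x y z"
  then show "\<not> induced_C le y x z"
    using induced_C_zero_asym induced_C_translate by blast
next
  fix x y z w
  assume "induced_C le x y z"
  then show "induced_C le w y z \<or> induced_C le x w z"
    using induced_C_zero_split induced_C_translate by blast
qed (simp add: induced_C_def)

theorem C_compatible_induced_C: "C_compatible (induced_C le)"
  unfolding C_compatible_def
proof (intro allI impI)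
  fix x y z u v
  assume "induced_C le x y z"
  moreover have "v + x + u - (v + z + u) = x - z" "v + y + u - (v + z + u) = y - z"
    by (simp_all add: algebra_simps)
  ultimately show "induced_C le (v + x + u) (v + y + u) (v + z + u)"
    using induced_C_translate by metis
qed

lemma otype_pos_iff_induced_C: "otype le d \<Longrightarrow> 0 \<prec> d \<longleftrightarrow> induced_C le d (-d) 0"
  using otype_pos_double by (auto simp: induced_C_zero_iff vtype_def)

lemma vtype_iff_induced_C:
  "vtype le t \<longleftrightarrow> t \<noteq> 0 \<and> \<not> induced_C le t (-t) 0 \<and> \<not> induced_C le (-t) t 0"
proof
  assume "vtype le t"
  then show "t \<noteq> 0 \<and> \<not> induced_C le t (-t) 0 \<and> \<not> induced_C le (-t) t 0"
    by (auto simp: induced_C_zero_iff otype_iff vtype_def)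
next
  assume t: "t \<noteq> 0 \<and> \<not> induced_C le t (-t) 0 \<and> \<not> induced_C le (-t) t 0"
  show "vtype le t"
  proof (rule ccontr)
    assume "\<not> vtype le t"
    then have o: "otype le t" by (simp add: vtype_def)
    consider "0 \<prec> t" | "0 \<prec> -t" using pos_or_neg neg_imp_uminus_pos t by blast
    then show False
      using otype_pos_iff_induced_C[of t] otype_pos_iff_induced_C[of "-t"] o t by cases auto
  qed
qed

lemma le_iff_induced_C:
  "x \<precsim> y \<longleftrightarrow>
     (vtype le y \<and> (induced_C le y x 0 \<or> (vtype le x \<and> \<not> induced_C le x y 0)))
   \<or> (\<not> vtype le y \<and> \<not> vtype le x \<and> (x = y \<or> induced_C le (y - x) (x - y) 0))"
proof (cases "vtype le y")
  case vy: True
  have "x \<precsim> y \<longleftrightarrow> x \<prec> y \<or> (vtype le x \<and> \<not> y \<prec> x)"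
    using vtype_sim[OF vy] qo_total by blast
  moreover have "induced_C le y x 0 \<longleftrightarrow> x \<prec> y"
    using vy vtype_pos by (auto simp: induced_C_zero_iff vtype_def)
  moreover have "induced_C le x y 0 \<longleftrightarrow> y \<prec> x" if "vtype le x"
    using that vtype_pos by (auto simp: induced_C_zero_iff vtype_def)
  ultimately show ?thesis using vy by blast
next
  case False
  then have oy: "otype le y" by (simp add: vtype_def)
  show ?thesis
  proof (cases "vtype le x")
    case True
    then show ?thesis using otype_less_vtype oy False by blast
  next
    case False
    then have ox: "otype le x" by (simp add: vtype_def)
    have "induced_C le (y - x) (x - y) 0 \<longleftrightarrow> x \<prec> y"
      using otype_less_iff_diff_pos[OF ox oy] otype_pos_iff_induced_C[OF otype_diff[OF ox oy]]
      by simp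
    moreover have "x \<precsim> y \<longleftrightarrow> x = y \<or> x \<prec> y" using otype_sim_imp_eq ox qo_refl by blast
    ultimately show ?thesis using ox oy by (simp add: vtype_def)
  qed
qed

lemma induced_C_determines_le:
  assumes "compatible_qo le'" and C: "induced_C le' = induced_C le"
  shows "le' = le"
proof -
  interpret other: compatible_qo_group le' by (fact compatible_qo_group.intro[OF assms(1)])
  have V: "vtype le' t = vtype le t" for t
    using vtype_iff_induced_C[of t] other.vtype_iff_induced_C[of t] C by simp
  show ?thesis
  proof (intro ext)
    fix x y
    show "le' x y = le x y"
      using le_iff_induced_C[of x y] other.le_iff_induced_C[of x y] V C by simp
  qed
qed

end

definition otype_form :: "gterm \<Rightarrow> qf_form" where
  "otype_form t = FOr (FEq t TZero) (FNot (FAnd (FLe t (TUminus t)) (FLe (TUminus t) t)))"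

definition qstrict_form :: "gterm \<Rightarrow> gterm \<Rightarrow> qf_form" where
  "qstrict_form s t = FAnd (FLe s t) (FNot (FAnd (FLe s t) (FLe t s)))"

definition induced_C_form :: qf_form where
  "induced_C_form = (let x = TVar 0; y = TVar 1; z = TVar 2 in
     FOr (FAnd (FNot (FEq x y)) (FEq y z))
      (FOr (FAnd (FNot (otype_form (TMinus x z))) (qstrict_form (TMinus y z) (TMinus x z)))
        (FAnd (otype_form (TMinus y z)) (FAnd (otype_form (TMinus x z))
          (FAnd (qstrict_form TZero (TMinus x y)) (qstrict_form TZero (TMinus x z)))))))"

definition vtype_form :: "gterm \<Rightarrow> qf_form" where
  "vtype_form t = FAnd (FNot (FEq t TZero))
     (FAnd (FNot (FC t (TUminus t) TZero)) (FNot (FC (TUminus t) t TZero)))"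

definition le_form :: qf_form where
  "le_form = (let x = TVar 0; y = TVar 1 in
     FOr (FAnd (vtype_form y) (FOr (FC y x TZero) (FAnd (vtype_form x) (FNot (FC x y TZero)))))
       (FAnd (FNot (vtype_form y)) (FAnd (FNot (vtype_form x))
         (FOr (FEq x y) (FC (TMinus y x) (TMinus x y) TZero)))))"

lemma no_C_induced_C_form: "no_C induced_C_form"
  by (simp add: Let_def induced_C_form_def otype_form_def qstrict_form_def)

lemma no_Le_le_form: "no_Le le_form"
  by (simp add: Let_def le_form_def vtype_form_def)

lemma feval_qstrict_form:
  "feval le C e (qstrict_form s t) \<longleftrightarrow> qstrict le (teval e s) (teval e t)"
  by (auto simp: qstrict_form_def qstrict_iff)

context compatible_qo_group
begin

lemma feval_otype_form: "feval le C e (otype_form t) \<longleftrightarrow> otype le (teval e t)"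
  by (simp add: otype_form_def otype_iff)

lemma feval_induced_C_form:
  "feval le (induced_C le) e induced_C_form \<longleftrightarrow> induced_C le (e 0) (e 1) (e 2)"
  by (simp add: Let_def induced_C_form_def induced_C_def feval_otype_form feval_qstrict_form vtype_def)

lemma feval_vtype_form:
  "feval le (induced_C le) e (vtype_form t) \<longleftrightarrow> vtype le (teval e t)"
  by (simp add: vtype_form_def vtype_iff_induced_C)

lemma feval_le_form: "feval le (induced_C le) e le_form \<longleftrightarrow> e 0 \<precsim> e 1"
  unfolding le_iff_induced_C[of "e 0" "e 1"] by (simp add: Let_def le_form_def feval_vtype_form)

end

theorem mainTheorem18:
  fixes le :: "'a::ab_group_add \<Rightarrow> 'a \<Rightarrow> bool"
  assumes "compatible_qo le"
  shows "C_relation (induced_C le) \<and> C_compatible (induced_C le)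
    \<and> (\<forall>le'. compatible_qo le' \<and> induced_C le' = induced_C le \<longrightarrow> le' = le)
    \<and> (\<exists>\<phi>. no_C \<phi> \<and> (\<forall>le'::'a \<Rightarrow> 'a \<Rightarrow> bool. compatible_qo le' \<longrightarrow>
          (\<forall>e. induced_C le' (e 0) (e 1) (e 2) \<longleftrightarrow> feval le' (induced_C le') e \<phi>)))
    \<and> (\<exists>\<psi>. no_Le \<psi> \<and> (\<forall>le'::'a \<Rightarrow> 'a \<Rightarrow> bool. compatible_qo le' \<longrightarrow>
          (\<forall>e. le' (e 0) (e 1) \<longleftrightarrow> feval le' (induced_C le') e \<psi>)))"
proof -
  interpret compatible_qo_group le by (fact compatible_qo_group.intro[OF assms])
  have "\<forall>le'. compatible_qo le' \<longrightarrow>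
      (\<forall>e. induced_C le' (e 0) (e 1) (e 2) \<longleftrightarrow> feval le' (induced_C le') e induced_C_form)"
    using compatible_qo_group.feval_induced_C_form[OF compatible_qo_group.intro] by blast
  moreover have "\<forall>le'. compatible_qo le' \<longrightarrow>
      (\<forall>e. le' (e 0) (e 1) \<longleftrightarrow> feval le' (induced_C le') e le_form)"
    using compatible_qo_group.feval_le_form[OF compatible_qo_group.intro] by blast
  ultimately show ?thesis
    using C_relation_induced_C C_compatible_induced_C induced_C_determines_le
      no_C_induced_C_form no_Le_le_form by blast
qed

end
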